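(* In the setting of the context, suppose $d\ge K_*$ and $0<T\le e^{c_*d/2}$. For $x_0\in\mathbb{R}^d$ let $X_t(x_0)$ solve $\mathrm{d}X_t=\hat s(X_t)\,\mathrm{d}t+\sqrt2\,\mathrm{d}B_t$, $X_0=x_0$, and let $\tau(x_0)=\inf\{t\ge0:\|X_t(x_0)\|\ge 4\sqrt d\}$. If $\|x_0\|\le 1.1\sqrt d$, then $\mathbb{P}(\tau(x_0)>T)\ge 1-3\alpha e^{-c_* d}$.
   Context: $c_*>0$, $K_*>0$, $\alpha_*\ge1$ are universal constants such that: whenever $d\ge K_*$, $0<T\le e^{c_*d/2}$, $\alpha\ge\alpha_*$ and $B$ is a standard Brownian motion in $\mathbb{R}^d$, $\mathbb{P}(\sup_{t\in[0,T]}\|\int_0^t e^{-\alpha(t-s)}\mathrm{d}B_s\|>0.1\sqrt d)\le 3\alpha e^{-c_*d}$. Set $\alpha=\alpha_*$. $\rho:\mathbb{R}\to[0,1]$ is a fixed smooth function with $\rho(r)=1$ for $r\le4$, $\rho(r)=0$ for $r\ge5$, $|\rho'|\le H$ (universal). For $\mu\in\mathbb{R}^d$ with $\|\mu\|=7\sqrt d$, $\hat s(x)=-\alpha x$ if $\|x\|\le4\sqrt d$, $\hat s(x)=-(x-\mu)$ if $\|x\|\ge5\sqrt d$, and $\hat s(x)=-\rho(\|x\|/\sqrt d)\alpha x-(1-\rho(\|x\|/\sqrt d))(x-\mu)$ otherwise. $B$ is a standard $d$-dimensional Brownian motion. *)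

theory Defs
  imports "HOL-Analysis.Analysis" "HOL-Probability.Probability"
begin

definition std_BM :: "'a measure \<Rightarrow> (real \<Rightarrow> 'a \<Rightarrow> real^'n) \<Rightarrow> bool" where
  "std_BM M B \<longleftrightarrow> prob_space M \<and>
     (\<forall>t. B t \<in> borel_measurable M) \<and>
     (\<forall>\<omega>\<in>space M. B 0 \<omega> = 0 \<and> continuous_on {0..} (\<lambda>t. B t \<omega>)) \<and>
     (\<forall>s t. 0 \<le> s \<and> s < t \<longrightarrow>
        (\<forall>i. distributed M lborel (\<lambda>\<omega>. (B t \<omega> - B s \<omega>) $ i)
                 (\<lambda>x. ennreal (normal_density 0 (sqrt (t - s)) x))) \<and>
        prob_space.indep_vars M (\<lambda>_. borel) (\<lambda>i \<omega>. (B t \<omega> - B s \<omega>) $ i) UNIV) \<and>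
     (\<forall>(k::nat) (tt::nat \<Rightarrow> real). 0 \<le> tt 0 \<and> (\<forall>i<k. tt i \<le> tt (Suc i)) \<longrightarrow>
        prob_space.indep_vars M (\<lambda>_. borel) (\<lambda>i \<omega>. B (tt (Suc i)) \<omega> - B (tt i) \<omega>) {..<k})"

text \<open>Pathwise (Wiener) integral of a deterministic kernel:
  int_0^t exp(-a(t-s)) dB_s = B_t - a * int_0^t exp(-a(t-s)) B_s ds
  (integration by parts).\<close>
definition ou_integral :: "real \<Rightarrow> (real \<Rightarrow> 'a \<Rightarrow> real^'n) \<Rightarrow> real \<Rightarrow> 'a \<Rightarrow> real^'n" where
  "ou_integral a B t \<omega> = B t \<omega> - a *\<^sub>R integral {0..t} (\<lambda>s. exp (- a * (t - s)) *\<^sub>R B s \<omega>)"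

definition smooth_real :: "(real \<Rightarrow> real) \<Rightarrow> bool" where
  "smooth_real f \<longleftrightarrow> (\<forall>k x. ((deriv ^^ k) f) differentiable (at x))"

definition s_hat :: "real \<Rightarrow> (real \<Rightarrow> real) \<Rightarrow> real^'n \<Rightarrow> real^'n \<Rightarrow> real^'n" where
  "s_hat a \<rho> \<mu> x =
     (let d = real CARD('n) in
      if norm x \<le> 4 * sqrt d then - (a *\<^sub>R x)
      else if norm x \<ge> 5 * sqrt d then - (x - \<mu>)
      else - (\<rho> (norm x / sqrt d) *\<^sub>R (a *\<^sub>R x)) - (1 - \<rho> (norm x / sqrt d)) *\<^sub>R (x - \<mu>))"

definition exit_time :: "(real \<Rightarrow> 'a \<Rightarrow> real^'n) \<Rightarrow> real \<Rightarrow> 'a \<Rightarrow> ereal" where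
  "exit_time X r \<omega> = Inf (ereal ` {t. 0 \<le> t \<and> norm (X t \<omega>) \<ge> r})"

end

theory Submission
  imports Defs
begin

text \<open>Inside the ball of radius \<open>4 sqrt d\<close> the drift \<open>s_hat\<close> is the linear field
  \<open>x \<mapsto> -\<alpha> x\<close>. Hence, up to the exit time, the solution coincides with the
  Ornstein-Uhlenbeck path \<open>e^(-\<alpha> t) x0 + sqrt 2 \<integral>\<^sub>0\<^sup>t e^(-\<alpha> (t - s)) dB\<^sub>s\<close>, the unique
  continuous solution of the linear integral equation \<open>x = x0 - \<alpha> \<integral>x + sqrt 2 B\<close>; so the exit
  time exceeds \<open>T\<close> exactly when this path stays in the ball on \<open>[0,T]\<close>. Where the stochastic
  convolution stays below \<open>0.1 sqrt d\<close> on \<open>[0,T]\<close>, the path has norm at most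
  \<open>1.1 sqrt d + 0.1 sqrt 2 sqrt d < 4 sqrt d\<close>, and the assumed tail bound controls the
  complementary event. The events involved are measurable because, by path continuity,
  suprema over \<open>[0,T]\<close> are suprema over rational times.\<close>

lemma Icc_subset_closure_Rats_Int:
  fixes a b :: real
  assumes "a < b"
  shows "{a..b} \<subseteq> closure (\<rat> \<inter> {a..b})"
proof -
  have "{a<..<b} \<inter> closure \<rat> \<subseteq> closure ({a<..<b} \<inter> \<rat>)"
    by (rule open_Int_closure_subset) simp
  then have "closure {a<..<b} \<subseteq> closure ({a<..<b} \<inter> \<rat>)"
    by (simp add: Rats_closure_real closure_minimal)
  also have "\<dots> \<subseteq> closure (\<rat> \<inter> {a..b})"
    by (intro closure_mono) auto
  finally show ?thesis
    using assms by simp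
qed

lemma SUP_Icc_eq_SUP_Rats_Int:
  fixes f :: "real \<Rightarrow> real"
  assumes f: "continuous_on {a..b} f" and "a < b"
  shows "(SUP t\<in>{a..b}. f t) = (SUP t\<in>\<rat> \<inter> {a..b}. f t)"
proof (rule antisym)
  have bdd: "bdd_above (f ` {a..b})"
    by (intro bounded_imp_bdd_above compact_imp_bounded compact_continuous_image f compact_Icc)
  have dense: "{a..b} \<subseteq> closure (\<rat> \<inter> {a..b})"
    using \<open>a < b\<close> by (rule Icc_subset_closure_Rats_Int)
  then have ne: "\<rat> \<inter> {a..b} \<noteq> {}"
    using \<open>a < b\<close> by auto
  show "(SUP t\<in>\<rat> \<inter> {a..b}. f t) \<le> (SUP t\<in>{a..b}. f t)"
    by (rule cSUP_subset_mono[OF ne bdd]) auto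
  let ?S = "SUP t\<in>\<rat> \<inter> {a..b}. f t"
  have "closure (\<rat> \<inter> {a..b}) \<subseteq> {t \<in> {a..b}. f t \<le> ?S}"
  proof (rule closure_minimal)
    show "\<rat> \<inter> {a..b} \<subseteq> {t \<in> {a..b}. f t \<le> ?S}"
      using bdd by (auto intro!: cSUP_upper bdd_above_mono[OF bdd])
    show "closed {t \<in> {a..b}. f t \<le> ?S}"
      by (intro continuous_on_closed_Collect_le f continuous_on_const) auto
  qed
  then show "(SUP t\<in>{a..b}. f t) \<le> ?S"
    using dense \<open>a < b\<close> by (intro cSUP_least) auto
qed

lemma SUP_continuous_Icc_attained:
  fixes f :: "real \<Rightarrow> real"
  assumes f: "continuous_on {a..b} f" and "a \<le> b"
  obtains m where "m \<in> {a..b}" "(SUP t\<in>{a..b}. f t) = f m" "\<And>t. t \<in> {a..b} \<Longrightarrow> f t \<le> f m"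
proof -
  obtain m where m: "m \<in> {a..b}" and max: "\<And>t. t \<in> {a..b} \<Longrightarrow> f t \<le> f m"
    using continuous_attains_sup[OF compact_Icc _ f] \<open>a \<le> b\<close> by auto
  moreover have "(SUP t\<in>{a..b}. f t) = f m"
    using m max by (intro antisym cSUP_least cSUP_upper bdd_aboveI2[of _ _ "f m"]) auto
  ultimately show ?thesis
    using that by blast
qed

lemma SUP_less_iff_continuous_Icc:
  fixes f :: "real \<Rightarrow> real"
  assumes "continuous_on {a..b} f" and "a \<le> b"
  shows "(SUP t\<in>{a..b}. f t) < r \<longleftrightarrow> (\<forall>t\<in>{a..b}. f t < r)"
  using assms by (rule SUP_continuous_Icc_attained) fastforce

lemma SUP_le_iff_continuous_Icc:
  fixes f :: "real \<Rightarrow> real"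
  assumes "continuous_on {a..b} f" and "a \<le> b"
  shows "(SUP t\<in>{a..b}. f t) \<le> r \<longleftrightarrow> (\<forall>t\<in>{a..b}. f t \<le> r)"
  using assms by (rule SUP_continuous_Icc_attained) fastforce

lemma borel_measurable_SUP_continuous_process:
  fixes X :: "real \<Rightarrow> 'a \<Rightarrow> real"
  assumes "a < b"
    and meas: "\<And>t. t \<in> {a..b} \<Longrightarrow> X t \<in> borel_measurable M"
    and cont: "\<And>\<omega>. \<omega> \<in> space M \<Longrightarrow> continuous_on {a..b} (\<lambda>t. X t \<omega>)"
  shows "(\<lambda>\<omega>. SUP t\<in>{a..b}. X t \<omega>) \<in> borel_measurable M"
proof (rule measurable_cong[THEN iffD2])
  show "(SUP t\<in>{a..b}. X t \<omega>) = (SUP t\<in>\<rat> \<inter> {a..b}. X t \<omega>)" if "\<omega> \<in> space M" for \<omega>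
    using SUP_Icc_eq_SUP_Rats_Int[OF cont[OF that] \<open>a < b\<close>] .
  show "(\<lambda>\<omega>. SUP t\<in>\<rat> \<inter> {a..b}. X t \<omega>) \<in> borel_measurable M"
  proof (rule borel_measurable_cSUP)
    show "countable (\<rat> \<inter> {a..b})"
      by (intro countable_Int1 countable_rat)
    show "bdd_above ((\<lambda>t. X t \<omega>) ` (\<rat> \<inter> {a..b}))" if "\<omega> \<in> space M" for \<omega>
      using bounded_imp_bdd_above[OF compact_imp_bounded[OF compact_continuous_image[OF cont[OF that] compact_Icc]]]
      by (rule bdd_above_mono) auto
  qed (use meas in auto)
qed

lemma LIMSEQ_floor_grid:
  fixes s :: real
  shows "(\<lambda>k. real_of_int \<lfloor>real (Suc k) * s\<rfloor> / real (Suc k)) \<longlonglongrightarrow> s"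
proof (rule tendsto_sandwich)
  show "(\<lambda>k. s - inverse (real (Suc k))) \<longlonglongrightarrow> s"
    using tendsto_diff[OF tendsto_const LIMSEQ_inverse_real_of_nat] by simp
  show "\<forall>\<^sub>F k in sequentially. s - inverse (real (Suc k)) \<le> real_of_int \<lfloor>real (Suc k) * s\<rfloor> / real (Suc k)"
  proof (intro always_eventually allI)
    fix k
    have "s - inverse (real (Suc k)) = (real (Suc k) * s - 1) / real (Suc k)"
      by (simp add: field_simps del: of_nat_Suc)
    also have "\<dots> \<le> real_of_int \<lfloor>real (Suc k) * s\<rfloor> / real (Suc k)"
      by (intro divide_right_mono) linarith+
    finally show "s - inverse (real (Suc k)) \<le> real_of_int \<lfloor>real (Suc k) * s\<rfloor> / real (Suc k)" .
  qed
  show "\<forall>\<^sub>F k in sequentially. real_of_int \<lfloor>real (Suc k) * s\<rfloor> / real (Suc k) \<le> s"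
    by (auto simp: field_simps simp del: of_nat_Suc)
qed simp

lemma measurable_pair_continuous_process:
  fixes X :: "real \<Rightarrow> 'a \<Rightarrow> 'b::metric_space"
  assumes meas: "\<And>t. X t \<in> borel_measurable M"
    and cont: "\<And>\<omega>. \<omega> \<in> space M \<Longrightarrow> continuous_on UNIV (\<lambda>t. X t \<omega>)"
  shows "(\<lambda>(\<omega>, t). X t \<omega>) \<in> borel_measurable (M \<Otimes>\<^sub>M lborel)"
proof (rule borel_measurable_LIMSEQ_metric)
  define grid where "grid k t = real_of_int \<lfloor>real (Suc k) * t\<rfloor> / real (Suc k)" for k t
  show "(\<lambda>(\<omega>, t). X (grid k t) \<omega>) \<in> borel_measurable (M \<Otimes>\<^sub>M lborel)" for k
  proof -
    \<comment> \<open>\<open>grid k t\<close> depends on \<open>t\<close> only through the integer \<open>\<lfloor>(k + 1) t\<rfloor>\<close>\<close>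
    have floor_meas: "(\<lambda>(\<omega>::'a, t). \<lfloor>real (Suc k) * t\<rfloor>) \<in> measurable (M \<Otimes>\<^sub>M lborel) (count_space UNIV)"
      by measurable
    have "(\<lambda>x. (\<lambda>i (\<omega>, t). X (real_of_int i / real (Suc k)) \<omega>) ((\<lambda>(\<omega>, t). \<lfloor>real (Suc k) * t\<rfloor>) x) x)
        \<in> borel_measurable (M \<Otimes>\<^sub>M lborel)"
      by (rule measurable_compose_countable'[OF _ floor_meas])
        (auto simp: case_prod_beta' intro: measurable_compose[OF measurable_fst meas])
    then show ?thesis
      by (simp add: grid_def case_prod_beta')
  qed
  fix x :: "'a \<times> real" assume "x \<in> space (M \<Otimes>\<^sub>M lborel)"
  then obtain \<omega> t where x: "x = (\<omega>, t)" and \<omega>: "\<omega> \<in> space M"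
    by (cases x) (auto simp: space_pair_measure)
  have "(\<lambda>k. X (grid k t) \<omega>) \<longlonglongrightarrow> X t \<omega>"
    using cont[OF \<omega>] LIMSEQ_floor_grid[of t] unfolding grid_def
    by (rule continuous_on_tendsto_compose) auto
  then show "(\<lambda>k. (\<lambda>(\<omega>, t). X (grid k t) \<omega>) x) \<longlonglongrightarrow> (\<lambda>(\<omega>, t). X t \<omega>) x"
    by (simp add: x)
qed

lemma borel_measurable_integral_continuous_process:
  fixes X :: "real \<Rightarrow> 'a \<Rightarrow> 'b::euclidean_space"
  assumes meas: "\<And>t. t \<in> {a..b} \<Longrightarrow> X t \<in> borel_measurable M"
    and cont: "\<And>\<omega>. \<omega> \<in> space M \<Longrightarrow> continuous_on {a..b} (\<lambda>t. X t \<omega>)"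
  shows "(\<lambda>\<omega>. integral {a..b} (\<lambda>t. X t \<omega>)) \<in> borel_measurable M"
proof (cases "a \<le> b")
  case False
  then show ?thesis
    by simp
next
  case True
  define clamp where "clamp t = max a (min b t)" for t
  have clamp: "clamp t \<in> {a..b}" for t
    using True by (auto simp: clamp_def)
  have clamp_id: "clamp t = t" if "t \<in> {a..b}" for t
    using that by (auto simp: clamp_def)
  define Y where "Y t \<omega> = X (clamp t) \<omega>" for t \<omega>
  have Y_cont: "continuous_on UNIV (\<lambda>t. Y t \<omega>)" if "\<omega> \<in> space M" for \<omega>
    unfolding Y_def clamp_def
    by (rule continuous_on_compose2[OF cont[OF that]]) (auto intro!: continuous_intros simp: True)
  have [measurable]: "(\<lambda>(\<omega>, t). Y t \<omega>) \<in> borel_measurable (M \<Otimes>\<^sub>M lborel)"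
    using Y_cont meas[OF clamp] by (intro measurable_pair_continuous_process) (auto simp: Y_def)
  have "(\<lambda>\<omega>. \<integral>t. indicator {a..b} t *\<^sub>R Y t \<omega> \<partial>lborel) \<in> borel_measurable M"
    by (rule lborel.borel_measurable_lebesgue_integral) measurable
  then show ?thesis
  proof (rule measurable_cong[THEN iffD1, rotated])
    fix \<omega> assume \<omega>: "\<omega> \<in> space M"
    have "set_integrable lborel {a..b} (\<lambda>t. Y t \<omega>)"
      unfolding set_integrable_def
      by (rule borel_integrable_compact[OF compact_Icc continuous_on_subset[OF Y_cont[OF \<omega>]]]) simp
    then have "(\<integral>t. indicator {a..b} t *\<^sub>R Y t \<omega> \<partial>lborel) = integral {a..b} (\<lambda>t. Y t \<omega>)"
      using set_borel_integral_eq_integral(2) by (simp add: set_lebesgue_integral_def)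
    also have "\<dots> = integral {a..b} (\<lambda>t. X t \<omega>)"
      by (rule integral_cong) (simp add: Y_def clamp_id)
    finally show "(\<integral>t. indicator {a..b} t *\<^sub>R Y t \<omega> \<partial>lborel) = integral {a..b} (\<lambda>t. X t \<omega>)" .
  qed
qed

lemma integral_exp_kernel:
  fixes f :: "real \<Rightarrow> 'v::real_normed_vector"
  shows "integral {0..t} (\<lambda>s. exp (- a * (t - s)) *\<^sub>R f s)
    = exp (- a * t) *\<^sub>R integral {0..t} (\<lambda>s. exp (a * s) *\<^sub>R f s)"
proof -
  have "exp (- a * (t - s)) = exp (- a * t) * exp (a * s)" for s
    by (simp add: exp_add[symmetric] algebra_simps)
  then show ?thesis
    by (simp add: integral_cmul[symmetric])
qed

lemma linear_integral_equation_solution: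
  fixes x b :: "real \<Rightarrow> 'v::banach" and x0 :: 'v
  assumes x: "continuous_on {0..T} x" and b: "continuous_on {0..T} b" and "a \<noteq> 0"
    and eq: "\<And>t. t \<in> {0..T} \<Longrightarrow> x t = x0 - a *\<^sub>R integral {0..t} x + c *\<^sub>R b t"
    and t: "t \<in> {0..T}"
  shows "x t = exp (- a * t) *\<^sub>R x0 + c *\<^sub>R (b t - a *\<^sub>R integral {0..t} (\<lambda>s. exp (- a * (t - s)) *\<^sub>R b s))"
proof -
  define P where "P u = integral {0..u} x" for u
  define J where "J u = integral {0..u} (\<lambda>s. exp (a * s) *\<^sub>R b s)" for u
  \<comment> \<open>By the equation, \<open>(exp (a u) P u)' = exp (a u) (x0 + c b u)\<close>; so \<open>\<Phi>\<close> is constant.\<close>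
  define \<Phi> where "\<Phi> u = exp (a * u) *\<^sub>R P u - ((exp (a * u) - 1) / a) *\<^sub>R x0 - c *\<^sub>R J u" for u
  have "(\<Phi> has_derivative (\<lambda>h. 0)) (at u within {0..T})" if u: "u \<in> {0..T}" for u
  proof -
    have "(\<Phi> has_vector_derivative
        exp (a * u) *\<^sub>R (x u + a *\<^sub>R P u - x0 - c *\<^sub>R b u)) (at u within {0..T})"
      unfolding \<Phi>_def P_def J_def using u \<open>a \<noteq> 0\<close>
      by (auto intro!: derivative_eq_intros integral_has_vector_derivative x b continuous_intros
          simp: algebra_simps)
    moreover have "x u + a *\<^sub>R P u - x0 - c *\<^sub>R b u = 0"
      using eq[OF u] by (simp add: P_def)
    ultimately show ?thesis
      by (simp add: has_vector_derivative_def)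
  qed
  then obtain k where "\<And>u. u \<in> {0..T} \<Longrightarrow> \<Phi> u = k"
    using has_derivative_zero_constant[of "{0..T}" \<Phi>] by auto
  moreover have "0 \<in> {0..T}"
    using t by simp
  ultimately have "\<Phi> t = \<Phi> 0"
    using t by metis
  then have \<Phi>_zero: "exp (a * t) *\<^sub>R P t = ((exp (a * t) - 1) / a) *\<^sub>R x0 + c *\<^sub>R J t"
    by (simp add: \<Phi>_def P_def J_def algebra_simps)
  define e where "e = exp (- a * t)"
  have e: "e * exp (a * t) = 1"
    by (simp add: e_def exp_minus)
  have "a *\<^sub>R P t = (a * e) *\<^sub>R (exp (a * t) *\<^sub>R P t)"
    using e by (simp add: mult.assoc)
  also have "\<dots> = (a * e * ((exp (a * t) - 1) / a)) *\<^sub>R x0 + (c * a * e) *\<^sub>R J t"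
    unfolding \<Phi>_zero by (simp add: scaleR_add_right mult_ac)
  also have "a * e * ((exp (a * t) - 1) / a) = 1 - e"
    using \<open>a \<noteq> 0\<close> e by (simp add: field_simps)
  finally have aP: "a *\<^sub>R P t = (1 - e) *\<^sub>R x0 + (c * a * e) *\<^sub>R J t" .
  have "x t = x0 - a *\<^sub>R P t + c *\<^sub>R b t"
    using eq[OF t] by (simp add: P_def)
  also have "\<dots> = e *\<^sub>R x0 + c *\<^sub>R (b t - a *\<^sub>R (e *\<^sub>R J t))"
    unfolding aP by (simp add: algebra_simps)
  finally show ?thesis
    unfolding integral_exp_kernel J_def e_def .
qed

lemma norm_less_on_Icc_iff_of_eq_before_exit:
  fixes x y :: "real \<Rightarrow> 'b::real_normed_vector"
  assumes x: "continuous_on {0..T} x" and x0: "norm (x 0) < r"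
    and agree: "\<And>u. u \<in> {0..T} \<Longrightarrow> (\<And>v. v \<in> {0..u} \<Longrightarrow> norm (x v) \<le> r) \<Longrightarrow> x u = y u"
  shows "(\<forall>t\<in>{0..T}. norm (x t) < r) \<longleftrightarrow> (\<forall>t\<in>{0..T}. norm (y t) < r)"
proof
  assume "\<forall>t\<in>{0..T}. norm (x t) < r"
  then have "x t = y t" if "t \<in> {0..T}" for t
    using that by (intro agree) (auto intro: less_imp_le)
  with \<open>\<forall>t\<in>{0..T}. norm (x t) < r\<close> show "\<forall>t\<in>{0..T}. norm (y t) < r"
    by simp
next
  assume y: "\<forall>t\<in>{0..T}. norm (y t) < r"
  show "\<forall>t\<in>{0..T}. norm (x t) < r"
  proof (rule ccontr)
    define S where "S = {u \<in> {0..T}. r \<le> norm (x u)}"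
    assume "\<not> (\<forall>t\<in>{0..T}. norm (x t) < r)"
    then have "S \<noteq> {}"
      by (auto simp: S_def)
    moreover have "closed S"
      unfolding S_def by (intro continuous_on_closed_Collect_le continuous_intros x closed_atLeastAtMost)
    moreover have bdd: "bdd_below S"
      by (auto simp: S_def bdd_below_def)
    ultimately have \<sigma>: "Inf S \<in> S"
      using closed_contains_Inf by blast
    have "0 < Inf S"
      using \<sigma> x0 by (auto simp: S_def less_eq_real_def)
    have "norm (x v) \<le> r" if "v \<in> {0..Inf S}" for v
    proof -
      have "{0..<Inf S} \<subseteq> {v \<in> {0..Inf S}. norm (x v) \<le> r}"
        using \<sigma> cInf_lower[OF _ bdd] by (force simp: S_def)
      moreover have "closed {v \<in> {0..Inf S}. norm (x v) \<le> r}"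
        using \<sigma> by (intro continuous_on_closed_Collect_le continuous_intros continuous_on_subset[OF x])
          (auto simp: S_def)
      ultimately have "closure {0..<Inf S} \<subseteq> {v \<in> {0..Inf S}. norm (x v) \<le> r}"
        by (rule closure_minimal)
      then show ?thesis
        using that \<open>0 < Inf S\<close> by auto
    qed
    then have "x (Inf S) = y (Inf S)"
      using \<sigma> by (intro agree) (auto simp: S_def)
    then show False
      using \<sigma> y by (force simp: S_def)
  qed
qed

lemma exit_time_greater_iff:
  fixes X :: "real \<Rightarrow> 'a \<Rightarrow> real^'n"
  assumes cont: "continuous_on {0..} (\<lambda>t. X t \<omega>)"
  shows "ereal T < exit_time X r \<omega> \<longleftrightarrow> (\<forall>t\<in>{0..T}. norm (X t \<omega>) < r)"
proof
  assume gt: "ereal T < exit_time X r \<omega>"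
  show "\<forall>t\<in>{0..T}. norm (X t \<omega>) < r"
  proof (rule ballI, rule ccontr)
    fix t assume t: "t \<in> {0..T}" and "\<not> norm (X t \<omega>) < r"
    then have "ereal t \<in> ereal ` {t. 0 \<le> t \<and> r \<le> norm (X t \<omega>)}"
      by auto
    then have "exit_time X r \<omega> \<le> ereal t"
      unfolding exit_time_def by (rule Inf_lower)
    with gt have "ereal T < ereal t"
      by (rule order_less_le_trans)
    then show False
      using t by simp
  qed
next
  assume inside: "\<forall>t\<in>{0..T}. norm (X t \<omega>) < r"
  define S where "S = {t. 0 \<le> t \<and> r \<le> norm (X t \<omega>)}"
  show "ereal T < exit_time X r \<omega>"
  proof (cases "S = {}")
    case True
    then show ?thesis
      unfolding exit_time_def S_def[symmetric] by (simp add: top_ereal_def)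
  next
    case False
    have "S = {t \<in> {0..}. r \<le> norm (X t \<omega>)}"
      by (auto simp: S_def)
    also have "closed \<dots>"
      by (intro continuous_on_closed_Collect_le continuous_intros cont closed_atLeast)
    finally have "closed S" .
    moreover have bdd: "bdd_below S"
      by (auto simp: S_def bdd_below_def)
    ultimately have "Inf S \<in> S"
      using False closed_contains_Inf by blast
    then have "ereal T < ereal (Inf S)"
      using inside by (force simp: S_def)
    also have "ereal (Inf S) \<le> exit_time X r \<omega>"
      unfolding exit_time_def S_def[symmetric]
      by (rule Inf_greatest) (auto intro: cInf_lower[OF _ bdd])
    finally show ?thesis .
  qed
qed

lemma continuous_on_ou_integral:
  fixes B :: "real \<Rightarrow> 'a \<Rightarrow> real^'n"
  assumes "continuous_on {0..T} (\<lambda>s. B s \<omega>)"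
  shows "continuous_on {0..T} (\<lambda>t. ou_integral a B t \<omega>)"
proof -
  have "(\<lambda>s. exp (a * s) *\<^sub>R B s \<omega>) integrable_on {0..T}"
    by (intro integrable_continuous_interval continuous_intros assms)
  then show ?thesis
    unfolding ou_integral_def integral_exp_kernel
    by (intro continuous_intros assms indefinite_integral_continuous_1)
qed

lemma borel_measurable_ou_integral:
  fixes B :: "real \<Rightarrow> 'a \<Rightarrow> real^'n"
  assumes meas: "\<And>s. B s \<in> borel_measurable M"
    and cont: "\<And>\<omega>. \<omega> \<in> space M \<Longrightarrow> continuous_on {0..t} (\<lambda>s. B s \<omega>)"
  shows "(\<lambda>\<omega>. ou_integral a B t \<omega>) \<in> borel_measurable M"
proof -
  have "(\<lambda>\<omega>. integral {0..t} (\<lambda>s. exp (- a * (t - s)) *\<^sub>R B s \<omega>)) \<in> borel_measurable M"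
    using meas cont
    by (intro borel_measurable_integral_continuous_process) (auto intro!: continuous_intros)
  then show ?thesis
    unfolding ou_integral_def using meas by measurable
qed

definition ou_process :: "real \<Rightarrow> real^'n \<Rightarrow> (real \<Rightarrow> 'a \<Rightarrow> real^'n) \<Rightarrow> real \<Rightarrow> 'a \<Rightarrow> real^'n" where
  "ou_process a x0 B t \<omega> = exp (- a * t) *\<^sub>R x0 + sqrt 2 *\<^sub>R ou_integral a B t \<omega>"

lemma continuous_on_ou_process:
  fixes B :: "real \<Rightarrow> 'a \<Rightarrow> real^'n"
  assumes "continuous_on {0..T} (\<lambda>s. B s \<omega>)"
  shows "continuous_on {0..T} (\<lambda>t. ou_process a x0 B t \<omega>)"
  unfolding ou_process_def by (intro continuous_intros continuous_on_ou_integral assms)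

lemma borel_measurable_SUP_norm_ou:
  fixes B :: "real \<Rightarrow> 'a \<Rightarrow> real^'n"
  assumes BM: "std_BM M B" and "0 < T"
  shows "(\<lambda>\<omega>. SUP t\<in>{0..T}. norm (ou_integral a B t \<omega>)) \<in> borel_measurable M"
    and "(\<lambda>\<omega>. SUP t\<in>{0..T}. norm (ou_process a x0 B t \<omega>)) \<in> borel_measurable M"
proof -
  have B_meas: "\<And>t. B t \<in> borel_measurable M"
    and B_cont: "\<And>\<omega> s. \<omega> \<in> space M \<Longrightarrow> continuous_on {0..s} (\<lambda>t. B t \<omega>)"
    using BM by (auto simp: std_BM_def intro: continuous_on_subset)
  have [measurable]: "(\<lambda>\<omega>. ou_integral a B t \<omega>) \<in> borel_measurable M" for t
    using B_meas B_cont by (rule borel_measurable_ou_integral)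
  show "(\<lambda>\<omega>. SUP t\<in>{0..T}. norm (ou_integral a B t \<omega>)) \<in> borel_measurable M"
    using \<open>0 < T\<close> B_cont
    by (intro borel_measurable_SUP_continuous_process continuous_on_norm continuous_on_ou_integral) measurable
  show "(\<lambda>\<omega>. SUP t\<in>{0..T}. norm (ou_process a x0 B t \<omega>)) \<in> borel_measurable M"
    using \<open>0 < T\<close> B_cont
    by (intro borel_measurable_SUP_continuous_process continuous_on_norm continuous_on_ou_process)
      (unfold ou_process_def, measurable)
qed

lemma SUP_norm_ou_process_less:
  fixes B :: "real \<Rightarrow> 'a \<Rightarrow> real^'n"
  assumes "0 \<le> a" "0 \<le> T" and B_cont: "continuous_on {0..T} (\<lambda>s. B s \<omega>)"
    and small: "(SUP t\<in>{0..T}. norm (ou_integral a B t \<omega>)) \<le> \<epsilon>"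
    and margin: "norm x0 + sqrt 2 * \<epsilon> < r"
  shows "(SUP t\<in>{0..T}. norm (ou_process a x0 B t \<omega>)) < r"
proof -
  have "norm (ou_process a x0 B t \<omega>) < r" if t: "t \<in> {0..T}" for t
  proof -
    have "norm (ou_integral a B t \<omega>) \<le> \<epsilon>"
      using small \<open>0 \<le> T\<close> t
      by (simp add: SUP_le_iff_continuous_Icc continuous_on_norm continuous_on_ou_integral B_cont)
    then have "sqrt 2 * norm (ou_integral a B t \<omega>) \<le> sqrt 2 * \<epsilon>"
      by (rule mult_left_mono) simp
    moreover have "exp (- a * t) * norm x0 \<le> norm x0"
      using \<open>0 \<le> a\<close> t by (intro mult_left_le_one_le) auto
    ultimately have "exp (- a * t) * norm x0 + sqrt 2 * norm (ou_integral a B t \<omega>) \<le> norm x0 + sqrt 2 * \<epsilon>"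
      by linarith
    moreover have "norm (ou_process a x0 B t \<omega>) \<le> exp (- a * t) * norm x0 + sqrt 2 * norm (ou_integral a B t \<omega>)"
      unfolding ou_process_def by (rule order_trans[OF norm_triangle_ineq]) simp
    ultimately show ?thesis
      using margin by linarith
  qed
  then show ?thesis
    using \<open>0 \<le> T\<close> by (simp add: SUP_less_iff_continuous_Icc continuous_on_norm continuous_on_ou_process B_cont)
qed

lemma s_hat_solution_eq_ou_process_before_exit:
  fixes X B :: "real \<Rightarrow> 'a \<Rightarrow> real^'n"
  assumes "\<alpha> > 0"
    and X_cont: "continuous_on {0..u} (\<lambda>t. X t \<omega>)" and B_cont: "continuous_on {0..u} (\<lambda>t. B t \<omega>)"
    and X_sde: "\<And>t. t \<in> {0..u} \<Longrightarrow>
      X t \<omega> = x0 + integral {0..t} (\<lambda>s. s_hat \<alpha> \<rho> \<mu> (X s \<omega>)) + sqrt 2 *\<^sub>R B t \<omega>"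
    and inside: "\<And>t. t \<in> {0..u} \<Longrightarrow> norm (X t \<omega>) \<le> 4 * sqrt (real CARD('n))"
    and "0 \<le> u"
  shows "X u \<omega> = ou_process \<alpha> x0 B u \<omega>"
proof -
  have "X t \<omega> = x0 - \<alpha> *\<^sub>R integral {0..t} (\<lambda>s. X s \<omega>) + sqrt 2 *\<^sub>R B t \<omega>" if t: "t \<in> {0..u}" for t
  proof -
    have "integral {0..t} (\<lambda>s. s_hat \<alpha> \<rho> \<mu> (X s \<omega>)) = integral {0..t} (\<lambda>s. - (\<alpha> *\<^sub>R X s \<omega>))"
      using t inside by (intro integral_cong) (auto simp: s_hat_def Let_def)
    then show ?thesis
      using X_sde[OF t] by (simp add: integral_neg)
  qed
  from linear_integral_equation_solution[OF X_cont B_cont _ this]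
  show ?thesis
    using \<open>\<alpha> > 0\<close> \<open>0 \<le> u\<close> by (simp add: ou_process_def ou_integral_def)
qed

lemma exit_time_greater_iff_SUP_ou_process:
  fixes X B :: "real \<Rightarrow> 'a \<Rightarrow> real^'n"
  defines "r \<equiv> 4 * sqrt (real CARD('n))"
  assumes "\<alpha> > 0" "0 \<le> T" "norm x0 < r"
    and X_cont: "continuous_on {0..} (\<lambda>t. X t \<omega>)" and B_cont: "continuous_on {0..} (\<lambda>t. B t \<omega>)"
    and B_zero: "B 0 \<omega> = 0"
    and X_sde: "\<And>t. 0 \<le> t \<Longrightarrow>
      X t \<omega> = x0 + integral {0..t} (\<lambda>s. s_hat \<alpha> \<rho> \<mu> (X s \<omega>)) + sqrt 2 *\<^sub>R B t \<omega>"
  shows "ereal T < exit_time X r \<omega> \<longleftrightarrow> (SUP t\<in>{0..T}. norm (ou_process \<alpha> x0 B t \<omega>)) < r"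
proof -
  have X_cont_T: "continuous_on {0..T} (\<lambda>t. X t \<omega>)"
    by (rule continuous_on_subset[OF X_cont]) auto
  have X_zero: "norm (X 0 \<omega>) < r"
    using X_sde[of 0] B_zero \<open>norm x0 < r\<close> by simp
  have X_eq: "X u \<omega> = ou_process \<alpha> x0 B u \<omega>"
    if u: "u \<in> {0..T}" and inside: "\<And>v. v \<in> {0..u} \<Longrightarrow> norm (X v \<omega>) \<le> r" for u
  proof (rule s_hat_solution_eq_ou_process_before_exit[where \<rho> = \<rho> and \<mu> = \<mu>])
    show "continuous_on {0..u} (\<lambda>t. X t \<omega>)" "continuous_on {0..u} (\<lambda>t. B t \<omega>)"
      by (auto intro: continuous_on_subset[OF X_cont] continuous_on_subset[OF B_cont])
  qed (use assms inside u in auto)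
  have Y_cont_T: "continuous_on {0..T} (\<lambda>t. ou_process \<alpha> x0 B t \<omega>)"
    unfolding ou_process_def
    by (intro continuous_intros continuous_on_ou_integral continuous_on_subset[OF B_cont]) auto
  have "ereal T < exit_time X r \<omega> \<longleftrightarrow> (\<forall>t\<in>{0..T}. norm (X t \<omega>) < r)"
    by (rule exit_time_greater_iff[where X = X and \<omega> = \<omega>]) (rule X_cont)
  also have "\<dots> \<longleftrightarrow> (\<forall>t\<in>{0..T}. norm (ou_process \<alpha> x0 B t \<omega>) < r)"
    using X_cont_T X_zero X_eq by (rule norm_less_on_Icc_iff_of_eq_before_exit)
  also have "\<dots> \<longleftrightarrow> (SUP t\<in>{0..T}. norm (ou_process \<alpha> x0 B t \<omega>)) < r"
    using \<open>0 \<le> T\<close> by (intro SUP_less_iff_continuous_Icc[symmetric] continuous_on_norm Y_cont_T)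
  finally show ?thesis .
qed

theorem lemma1:
  fixes c K \<alpha> H T :: real
    and \<rho> :: "real \<Rightarrow> real"
    and \<mu> x0 :: "real^'n"
    and M :: "'a measure"
    and B X :: "real \<Rightarrow> 'a \<Rightarrow> real^'n"
  assumes const_pos: "c > 0" "K > 0" "\<alpha> \<ge> 1"
    and universal: "\<And>(M' :: 'a measure) (B' :: real \<Rightarrow> 'a \<Rightarrow> real^'n) T' a.
        real CARD('n) \<ge> K \<Longrightarrow> 0 < T' \<Longrightarrow> T' \<le> exp (c * real CARD('n) / 2) \<Longrightarrow>
        a \<ge> \<alpha> \<Longrightarrow> std_BM M' B' \<Longrightarrow>
        measure M' {\<omega> \<in> space M'. (SUP t\<in>{0..T'}. norm (ou_integral a B' t \<omega>))
                                    > 0.1 * sqrt (real CARD('n))}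
          \<le> 3 * a * exp (- c * real CARD('n))"
    and rho_smooth: "smooth_real \<rho>"
    and rho_range: "\<And>r. 0 \<le> \<rho> r \<and> \<rho> r \<le> 1"
    and rho_one: "\<And>r. r \<le> 4 \<Longrightarrow> \<rho> r = 1"
    and rho_zero: "\<And>r. r \<ge> 5 \<Longrightarrow> \<rho> r = 0"
    and rho_deriv: "\<And>r. \<bar>deriv \<rho> r\<bar> \<le> H"
    and mu: "norm \<mu> = 7 * sqrt (real CARD('n))"
    and d: "real CARD('n) \<ge> K"
    and T: "0 < T" "T \<le> exp (c * real CARD('n) / 2)"
    and BM: "std_BM M B"
    and X_cont: "\<And>\<omega>. \<omega> \<in> space M \<Longrightarrow> continuous_on {0..} (\<lambda>t. X t \<omega>)"
    and X_sde: "\<And>\<omega> t. \<omega> \<in> space M \<Longrightarrow> 0 \<le> t \<Longrightarrow>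
        X t \<omega> = x0 + integral {0..t} (\<lambda>s. s_hat \<alpha> \<rho> \<mu> (X s \<omega>)) + sqrt 2 *\<^sub>R B t \<omega>"
    and x0: "norm x0 \<le> 1.1 * sqrt (real CARD('n))"
  shows "measure M {\<omega> \<in> space M. exit_time X (4 * sqrt (real CARD('n))) \<omega> > ereal T}
           \<ge> 1 - 3 * \<alpha> * exp (- c * real CARD('n))"
proof -
  interpret prob_space M
    using BM by (simp add: std_BM_def)
  have B_cont: "\<And>\<omega>. \<omega> \<in> space M \<Longrightarrow> continuous_on {0..} (\<lambda>t. B t \<omega>)"
    and B_zero: "\<And>\<omega>. \<omega> \<in> space M \<Longrightarrow> B 0 \<omega> = 0"
    using BM by (auto simp: std_BM_def)
  define d where "d = real CARD('n)"
  define Bad where "Bad = {\<omega> \<in> space M. (SUP t\<in>{0..T}. norm (ou_integral \<alpha> B t \<omega>)) > 0.1 * sqrt d}"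
  define Inside where "Inside = {\<omega> \<in> space M. (SUP t\<in>{0..T}. norm (ou_process \<alpha> x0 B t \<omega>)) < 4 * sqrt d}"
  note [measurable] = borel_measurable_SUP_norm_ou[OF BM T(1)]
  have Bad_meas: "Bad \<in> sets M" and Inside_meas: "Inside \<in> sets M"
    unfolding Bad_def Inside_def by measurable
  have "0 < sqrt d"
    by (simp add: d_def)
  then have "sqrt 2 * (0.1 * sqrt d) < 2 * (0.1 * sqrt d)"
    by (intro mult_strict_right_mono[OF sqrt2_less_2]) simp
  with \<open>0 < sqrt d\<close> have "norm x0 + sqrt 2 * (0.1 * sqrt d) < 4 * sqrt d"
    using x0 unfolding d_def by linarith
  then have "space M - Bad \<subseteq> Inside"
    using const_pos T(1) continuous_on_subset[OF B_cont]
    by (auto simp: Bad_def Inside_def not_less intro!: SUP_norm_ou_process_less[where \<epsilon> = "0.1 * sqrt d"])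
  moreover have "{\<omega> \<in> space M. ereal T < exit_time X (4 * sqrt d) \<omega>} = Inside"
  proof -
    have "norm x0 < 4 * sqrt (real CARD('n))"
      using x0 \<open>0 < sqrt d\<close> unfolding d_def by linarith
    then have "ereal T < exit_time X (4 * sqrt d) \<omega> \<longleftrightarrow> \<omega> \<in> Inside" if "\<omega> \<in> space M" for \<omega>
      using exit_time_greater_iff_SUP_ou_process[where X = X and B = B and \<omega> = \<omega>,
          OF _ _ _ X_cont[OF that] B_cont[OF that] B_zero[OF that] X_sde[OF that]]
        const_pos T(1) that
      by (simp add: Inside_def d_def)
    then show ?thesis
      by (auto simp: Inside_def)
  qed
  moreover have "measure M Bad \<le> 3 * \<alpha> * exp (- c * real CARD('n))"
    using universal[OF d T order_refl BM] by (simp add: Bad_def d_def)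
  ultimately show ?thesis
    using prob_compl[OF Bad_meas] finite_measure_mono[OF _ Inside_meas, of "space M - Bad"]
    by (simp add: d_def)
qed

end
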